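(* Let $q$ be a prime power, $m>3$, $n=q^{2m}-1$, and define $Z_{des}=\{(x,y):1\le x,y\le n,\ xy<q^{2m}-1-q^{m-1}\}$ and, for integers $0\le k\le (2m-1)/2$, $Z_{des,k}=\{(x,y)\in Z_{des}: q^k-1<x\le q^{k+1}-1\}$. For odd $l\in\{1,3,\dots,2m-1\}$ let $f(x,y,l)=(-xq^l\bmod n)(-yq^l\bmod n)$. Then: (a) For all $0\le k\le(2m-1)/2$, $(x,y)\in Z_{des,k}$ and odd $l\in\{1,\dots,2m-1\}$ with $l\ne 2m-k-1$: $f(x,y,l)\ge q^{2m}-1-q^{m-1}$ if $m$ is even, and $f(x,y,l)\ge q^{2m}-1-q^{m}$ if $m$ is odd; these bounds are attained at $k=0$, $x=1$, $y=q^{2m}-1-q^{2m-l}$ with $l=m-1$ ($m$ even), respectively $l=m$ ($m$ odd). (b) For all $0\le k\le(2m-1)/2$, $(x,y)\in Z_{des,k}$ and $l=2m-k-1$ odd: if $m$ is odd then $f(x,y,l)\ge (q^m-1)^2$, with equality at $k=m-1$, $l=m$, $x=y=q^m-1$; if $m$ is even then $f(x,y,l)\ge q^{2m}-1$.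
   Context: Here $a\bmod n$ denotes the least nonnegative residue of $a$ modulo $n$. *)

theory Defs
  imports Main "HOL-Number_Theory.Number_Theory"
begin

definition nn :: "nat \<Rightarrow> nat \<Rightarrow> int" where
  "nn q m = int q ^ (2*m) - 1"

definition Zdes :: "nat \<Rightarrow> nat \<Rightarrow> (int \<times> int) set" where
  "Zdes q m = {(x, y). 1 \<le> x \<and> x \<le> nn q m \<and> 1 \<le> y \<and> y \<le> nn q m \<and>
                       x * y < int q ^ (2*m) - 1 - int q ^ (m - 1)}"

definition Zdesk :: "nat \<Rightarrow> nat \<Rightarrow> nat \<Rightarrow> (int \<times> int) set" where
  "Zdesk q m k = {(x, y) \<in> Zdes q m. int q ^ k - 1 < x \<and> x \<le> int q ^ (k+1) - 1}"

text \<open>f(x,y,l) = (-x q^l mod n)(-y q^l mod n); Isabelle's int mod with positive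
  modulus gives the least nonnegative residue.\<close>
definition fval :: "nat \<Rightarrow> nat \<Rightarrow> int \<Rightarrow> int \<Rightarrow> nat \<Rightarrow> int" where
  "fval q m x y l = ((- x * int q ^ l) mod nn q m) * ((- y * int q ^ l) mod nn q m)"

end

theory Submission
  imports Defs
begin

text \<open>Put \<open>p = q^l\<close> and \<open>P = q^(2m-l)\<close>, so that \<open>n = pP - 1\<close>. For \<open>1 \<le> z < pP\<close>
  with \<open>z = z\<^sub>1 P + z\<^sub>0\<close>, \<open>0 \<le> z\<^sub>0 < P\<close>, one has
  \<open>(-zp) mod n = (P - 1 - z\<^sub>0) p + (p - 1 - z\<^sub>1)\<close>: multiplication by \<open>-q^l\<close> complements the
  base-\<open>q\<close> digits of \<open>z\<close> and rotates them by \<open>l\<close> places. So a factor of \<open>f\<close> is small only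
  if \<open>z\<^sub>0 = P - 1\<close> and \<open>z\<^sub>1\<close> is close to \<open>p\<close>, i.e. only if \<open>z\<close> is just below a multiple of \<open>P\<close>
  close to \<open>n\<close>.

  If \<open>k + 1 + l < 2m\<close>, then \<open>x\<close> is below \<open>P/q\<close>, the first factor exceeds \<open>n/2\<close>, and the product
  can drop below \<open>n\<close> only if the second factor is \<open>1\<close>, which forces \<open>(x, y) = (1, n - P)\<close>:
  the extremal pair of (a). If \<open>l > m\<close> and \<open>x \<ge> q\<close>, both \<open>x\<close> and \<open>y < q^(2m)/x\<close> are below
  \<open>q^(2m-1) = q^(l-1) P\<close>, so both factors are at least \<open>q^(l-1)\<close>.\<close>

definition rot :: "int \<Rightarrow> int \<Rightarrow> int \<Rightarrow> int" where
  "rot p P z = (- z * p) mod (p * P - 1)"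

lemma div_less_of_less_mult:
  fixes z c P :: int
  assumes "z < c * P" "0 < P"
  shows "z div P < c"
  using assms by (smt (verit) div_mod_decomp_int mult_right_less_imp_less pos_mod_sign)

lemma rot_eq_digits:
  fixes p P z :: int
  assumes p: "1 \<le> p" and P: "1 \<le> P" and z: "1 \<le> z" "z < p * P"
  shows "rot p P z = (P - 1 - z mod P) * p + (p - 1 - z div P)"
proof -
  define r where "r = (P - 1 - z mod P) * p + (p - 1 - z div P)"
  have lo: "0 \<le> z mod P" "z mod P < P" using P by simp_all
  have hi: "0 \<le> z div P" "z div P < p"
    using z P by (simp_all add: div_int_pos_iff div_less_of_less_mult)
  have "0 \<le> r" unfolding r_def using lo hi p by simp
  moreover have "r < p * P - 1"
  proof -
    have "r = p * P - 1 - (z mod P * p + z div P)" unfolding r_def by (simp add: algebra_simps)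
    moreover have "z mod P * p + z div P > 0"
      using lo hi p z div_mult_mod_eq[of z P] by (smt (verit) mult_nonneg_nonneg mult_eq_0_iff)
    ultimately show ?thesis by simp
  qed
  moreover have "- z * p = r + (- (z div P + 1)) * (p * P - 1)"
  proof -
    have "- (a * P + b) * p = (P - 1 - b) * p + (p - 1 - a) + (- (a + 1)) * (p * P - 1)"
      for a b :: int by (simp add: algebra_simps)
    from this[of "z div P" "z mod P"] show ?thesis unfolding r_def by simp
  qed
  ultimately show ?thesis unfolding rot_def r_def[symmetric] by simp
qed

lemma rot_below_base:
  fixes p P z :: int
  assumes "1 \<le> p" "1 \<le> z" "z < P"
  shows "rot p P z = p * P - 1 - z * p"
proof -
  have "1 * P \<le> p * P" using assms by (intro mult_right_mono) auto
  then have "z < p * P" using assms by linarith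
  moreover have "z div P = 0" "z mod P = z" using assms by simp_all
  ultimately show ?thesis using rot_eq_digits[of p P z] assms by (simp add: algebra_simps)
qed

lemma rot_ge_of_less:
  fixes p P z c :: int
  assumes "1 \<le> P" "1 \<le> z" "z < c * P" "c \<le> p"
  shows "p - c \<le> rot p P z"
proof -
  have "z div P < c" using assms by (simp add: div_less_of_less_mult)
  moreover have "0 \<le> z div P" using assms by (simp add: div_int_pos_iff)
  ultimately have p: "1 \<le> p" using assms by linarith
  have "c * P \<le> p * P" using assms by (intro mult_right_mono) auto
  then have "z < p * P" using assms by linarith
  moreover have "0 \<le> (P - 1 - z mod P) * p" using assms p by simp
  ultimately show ?thesis using rot_eq_digits[of p P z] assms p \<open>z div P < c\<close> by linarith
qed

lemma rot_ge_of_low_digit_not_max: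
  fixes p P z :: int
  assumes "1 \<le> p" "1 \<le> P" "1 \<le> z" "z < p * P" "z mod P \<noteq> P - 1"
  shows "p \<le> rot p P z"
proof -
  have "1 \<le> P - 1 - z mod P" using assms pos_mod_bound[of P z] by linarith
  then have "p \<le> (P - 1 - z mod P) * p" using assms by simp
  moreover have "z div P < p" using assms by (simp add: div_less_of_less_mult)
  ultimately show ?thesis using rot_eq_digits[OF assms(1-4)] by simp
qed

lemma rot_of_low_digit_max:
  fixes p P z :: int
  assumes "1 \<le> p" "1 \<le> P" "1 \<le> z" "z < p * P" "z mod P = P - 1"
  shows "rot p P z = p - 1 - z div P" "z = (z div P + 1) * P - 1"
proof -
  show "rot p P z = p - 1 - z div P" using rot_eq_digits[OF assms(1-4)] assms(5) by simp
  show "z = (z div P + 1) * P - 1"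
    using assms(5) div_mult_mod_eq[of z P] by (simp add: distrib_right)
qed

lemma rot_extremal_prod:
  fixes p P :: int
  assumes "2 \<le> p" "2 \<le> P"
  shows "rot p P 1 * rot p P (p * P - 1 - P) = p * P - 1 - p"
proof -
  have "4 \<le> p * P" using assms mult_mono[of 2 p 2 P] by simp
  have "- (p * P - 1 - P) * p = 1 + (1 - p) * (p * P - 1)" by (simp add: algebra_simps)
  then have "rot p P (p * P - 1 - P) = 1 mod (p * P - 1)" unfolding rot_def by simp
  also have "\<dots> = 1" using \<open>4 \<le> p * P\<close> by simp
  finally show ?thesis using rot_below_base[of p 1 P] assms by simp
qed

lemma rot_prod_ge_or_extremal:
  fixes p P x y :: int
  assumes p: "2 \<le> p" and x: "1 \<le> x" "2 * (x + 1) \<le> P" and y: "1 \<le> y"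
    and xy: "x * y < p * P - 2"
  shows "p * P - 1 \<le> rot p P x * rot p P y \<or> x = 1 \<and> y = p * P - 1 - P"
proof (cases "2 \<le> rot p P y")
  case True
  have "(2 * x) * p \<le> (P - 2) * p" using x p by (intro mult_right_mono) auto
  then have "p * P + 2 \<le> 2 * rot p P x"
    using rot_below_base[of p x P] x p by (simp add: algebra_simps)
  moreover have "0 \<le> p * P" using x p by simp
  ultimately have "rot p P x * 2 \<le> rot p P x * rot p P y"
    using True by (intro mult_left_mono) auto
  with \<open>p * P + 2 \<le> 2 * rot p P x\<close> show ?thesis by simp
next
  case False
  have "1 * y \<le> x * y" using x y by (intro mult_right_mono) auto
  then have yN: "y < p * P - 2" using xy by simp
  have P: "1 \<le> P" using x by simp
  have top: "y mod P = P - 1"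
    using rot_ge_of_low_digit_not_max[of p P y] False p P y yN by fastforce
  have rot_y: "rot p P y = p - 1 - y div P" "y = (y div P + 1) * P - 1"
    using rot_of_low_digit_max[of p P y] p P y yN top by simp_all
  have "y div P \<noteq> p - 1"
    using rot_y(2) yN p by (auto simp: algebra_simps)
  moreover have "y div P \<le> p - 1"
    using yN P by (simp add: div_less_of_less_mult)
  ultimately have "y div P = p - 2" using False rot_y(1) p yN by linarith
  then have "y = (p - 1) * P - 1" using rot_y(2) by simp
  then have y_eq: "y = p * P - 1 - P" by (simp add: algebra_simps)
  have "x = 1"
  proof (rule ccontr)
    assume "x \<noteq> 1"
    then have "2 * y \<le> x * y" using x y by (intro mult_right_mono) auto
    moreover have "2 * P \<le> p * P" using p P by (intro mult_right_mono) auto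
    ultimately show False using xy y_eq by linarith
  qed
  with y_eq show ?thesis by simp
qed

lemma rot_square_prod_ge:
  fixes Q x y :: int
  assumes x: "2 \<le> x" "x < Q" and y: "1 \<le> y" and xy: "x * y < Q * Q"
  shows "(Q - 1)^2 \<le> rot Q Q x * rot Q Q y"
proof -
  have Q: "1 \<le> Q" using x by simp
  have "1 * y \<le> x * y" using x y by (intro mult_right_mono) auto
  then have yQ: "y < Q * Q" using xy by simp
  have rot_x: "rot Q Q x = Q * Q - 1 - x * Q" using rot_below_base[of Q x Q] x by simp
  have "x * Q \<le> (Q - 1) * Q" using x by (intro mult_right_mono) auto
  then have rot_x_ge: "Q - 1 \<le> rot Q Q x" using rot_x by (simp add: algebra_simps)
  consider (low) "y mod Q \<noteq> Q - 1" | (first) "y mod Q = Q - 1" "y div Q = 0"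
    | (later) "y mod Q = Q - 1" "y div Q \<noteq> 0"
    by blast
  then show ?thesis
  proof cases
    case low
    then have "Q \<le> rot Q Q y" using rot_ge_of_low_digit_not_max[of Q Q y] Q y yQ by simp
    then have "(Q - 1) * Q \<le> rot Q Q x * rot Q Q y"
      using rot_x_ge Q by (intro mult_mono) auto
    moreover have "(Q - 1) * (Q - 1) \<le> (Q - 1) * Q" using Q by (intro mult_left_mono) auto
    ultimately show ?thesis by (simp add: power2_eq_square)
  next
    case first
    then have "rot Q Q y = Q - 1" using rot_of_low_digit_max(1)[of Q Q y] Q y yQ by simp
    then show ?thesis using rot_x_ge Q by (simp add: power2_eq_square mult_right_mono)
  next
    case later
    \<comment> \<open>Then \<open>y = tQ - 1\<close> with \<open>t \<ge> 2\<close>, and \<open>xy < Q\<^sup>2\<close> forces \<open>xt \<le> Q\<close>: both \<open>x\<close> and \<open>t\<close> are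
      at most \<open>Q/2\<close>, so \<open>rot y = Q - t \<ge> 2\<close> while \<open>rot x \<ge> Q\<^sup>2/2 - 1\<close>.\<close>
    define t where "t = y div Q + 1"
    have "0 \<le> y div Q" using y Q by (simp add: div_int_pos_iff)
    then have t: "2 \<le> t" using later t_def by simp
    have y_eq: "y = t * Q - 1" and rot_y: "rot Q Q y = Q - t"
      using rot_of_low_digit_max[of Q Q y] later Q y yQ by (simp_all add: t_def)
    have "(x * t) * Q < (Q + 1) * Q"
      using xy x unfolding y_eq by (simp add: algebra_simps)
    then have xt: "x * t \<le> Q" using Q by (simp add: mult_less_cancel_right)
    have "2 * t \<le> x * t" "x * 2 \<le> x * t" using x t by (intro mult_mono; simp)+
    then have rot_y_ge: "2 \<le> rot Q Q y" and "2 * x \<le> Q" using xt rot_y t by linarith+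
    then have "(2 * x) * Q \<le> Q * Q" using Q by (intro mult_right_mono) auto
    then have "Q * Q - 2 \<le> 2 * rot Q Q x" using rot_x by linarith
    moreover have "rot Q Q x * 2 \<le> rot Q Q x * rot Q Q y"
      using rot_y_ge rot_x_ge Q by (intro mult_left_mono) auto
    ultimately have "Q * Q - 2 \<le> rot Q Q x * rot Q Q y" by simp
    then show ?thesis using x by (simp add: power2_eq_square algebra_simps)
  qed
qed

lemma rot_pow_prod_ge_of_small:
  fixes q x y :: int and m l :: nat
  assumes q: "2 \<le> q" and l: "m < l" "l \<le> 2 * m"
    and x: "1 \<le> x" "x < q ^ (2 * m - 1)" and y: "1 \<le> y" "y < q ^ (2 * m - 1)"
  shows "q ^ (2 * m) \<le> rot (q ^ l) (q ^ (2 * m - l)) x * rot (q ^ l) (q ^ (2 * m - l)) y"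
proof -
  let ?c = "q ^ (l - 1)" and ?rot = "rot (q ^ l) (q ^ (2 * m - l))"
  have cP: "?c * q ^ (2 * m - l) = q ^ (2 * m - 1)"
    using l by (simp flip: power_add)
  have "q ^ l = q * ?c" using l by (simp flip: power_Suc)
  then have "2 * ?c \<le> q ^ l" using q by simp
  then have "?c \<le> ?rot z" if "1 \<le> z" "z < q ^ (2 * m - 1)" for z
    using rot_ge_of_less[of "q ^ (2 * m - l)" z ?c "q ^ l"] that q cP by simp
  then have "?c * ?c \<le> ?rot x * ?rot y"
    using x y q by (intro mult_mono') auto
  moreover have "q ^ (2 * m) \<le> ?c * ?c"
    using q l by (simp add: power_increasing flip: power_add)
  ultimately show ?thesis by simp
qed

lemma rot_pow_prod_ge_max_shift:
  fixes q x y :: int and m :: nat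
  assumes q: "2 \<le> q" and m: "4 \<le> m" and x: "1 \<le> x" "x < q" and y: "1 \<le> y"
    and xy: "x * y < q ^ (2 * m) - 1 - q ^ (m - 1)"
  shows "q ^ (2 * m) - 1 \<le> rot (q ^ (2 * m - 1)) q x * rot (q ^ (2 * m - 1)) q y"
proof -
  define p where "p = q ^ (2 * m - 1)"
  have pq: "p * q = q ^ (2 * m)" unfolding p_def using m by (simp flip: power_Suc2)
  have "m - 1 = Suc (m - 2)" using m by simp
  then have qm: "q ^ (m - 1) = q ^ (m - 2) * q" by (simp only: power_Suc2)
  have "q \<le> p" unfolding p_def using q m by (simp add: self_le_power)
  have "1 * y \<le> x * y" using x y by (intro mult_right_mono) auto
  then have "y < (p - q ^ (m - 2)) * q" using xy pq qm by (simp add: algebra_simps)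
  then have rot_y: "q ^ (m - 2) \<le> rot p q y"
    using rot_ge_of_less[of q y "p - q ^ (m - 2)" p] q y by simp
  have "q * q \<le> q ^ (m - 2)" using q m power_increasing[of 2 "m - 2" q] by (simp add: power2_eq_square)
  moreover have "2 * q \<le> q * q" using q by (intro mult_right_mono) auto
  ultimately have "q + 1 \<le> rot p q y" using rot_y q by linarith
  then have "(p - 1) * (q + 1) \<le> rot p q x * rot p q y"
    using rot_ge_of_less[of q x 1 p] x q \<open>q \<le> p\<close> by (intro mult_mono) auto
  moreover have "p * q - 1 \<le> (p - 1) * (q + 1)" using \<open>q \<le> p\<close> by (simp add: algebra_simps)
  ultimately have "q ^ (2 * m) - 1 \<le> rot p q x * rot p q y" using pq by linarith
  then show ?thesis by (simp add: p_def)
qed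

lemma fval_eq_rot:
  assumes "l \<le> 2 * m"
  shows "fval q m x y l =
    rot (int q ^ l) (int q ^ (2 * m - l)) x * rot (int q ^ l) (int q ^ (2 * m - l)) y"
proof -
  have "int q ^ l * int q ^ (2 * m - l) = int q ^ (2 * m)" using assms by (simp flip: power_add)
  then show ?thesis unfolding fval_def nn_def rot_def by simp
qed

lemma mem_Zdesk_iff:
  "(x, y) \<in> Zdesk q m k \<longleftrightarrow>
     1 \<le> x \<and> x < int q ^ (2 * m) \<and> 1 \<le> y \<and> y < int q ^ (2 * m) \<and>
     x * y < int q ^ (2 * m) - 1 - int q ^ (m - 1) \<and> int q ^ k \<le> x \<and> x < int q ^ (k + 1)"
  unfolding Zdesk_def Zdes_def nn_def by auto

lemma fval_ge_of_wide_shift: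
  fixes q m k l :: nat
  assumes q: "2 \<le> q" and k: "1 \<le> k" "k < m" and l: "m < l" "l \<le> 2 * m"
    and Z: "(x, y) \<in> Zdesk q m k"
  shows "int q ^ (2 * m) \<le> fval q m x y l"
proof -
  from Z have x: "int q ^ k \<le> x" "x < int q ^ (k + 1)" and y: "1 \<le> y"
    and "x * y < int q ^ (2 * m) - 1 - int q ^ (m - 1)"
    by (simp_all add: mem_Zdesk_iff)
  then have xy: "x * y < int q ^ (2 * m)" using zero_le_power[of "int q" "m - 1"] by linarith
  have "int q \<le> int q ^ k" using q k by (intro self_le_power) auto
  with x have "int q \<le> x" by linarith
  have "int q ^ (k + 1) \<le> int q ^ (2 * m - 1)" using q k by (intro power_increasing) auto
  then have "x < int q ^ (2 * m - 1)" using x by simp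
  moreover have "int q * y < int q * int q ^ (2 * m - 1)"
  proof -
    have "int q * y \<le> x * y" using \<open>int q \<le> x\<close> y by (intro mult_right_mono) auto
    also have "\<dots> < int q ^ Suc (2 * m - 1)" using xy k by simp
    finally show ?thesis by simp
  qed
  then have "y < int q ^ (2 * m - 1)" using q by simp
  ultimately show ?thesis
    using rot_pow_prod_ge_of_small[of "int q" m l x y] q l \<open>int q \<le> x\<close> y fval_eq_rot[OF l(2)]
    by simp
qed

lemma fval_ge_or_extremal:
  fixes q m k l :: nat
  assumes q: "2 \<le> q" and k: "2 * k \<le> 2 * m - 1" and Z: "(x, y) \<in> Zdesk q m k"
    and l: "1 \<le> l" "l \<le> 2 * m - 1" "l \<noteq> 2 * m - k - 1"
  shows "int q ^ (2 * m) - 1 \<le> fval q m x y l \<or>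
    l \<le> m \<and> x = 1 \<and> y = int q ^ (2 * m) - 1 - int q ^ (2 * m - l)"
proof (cases "k + 1 + l < 2 * m")
  case True
  let ?p = "int q ^ l" and ?P = "int q ^ (2 * m - l)"
  from Z have x: "1 \<le> x" "x < int q ^ (k + 1)" and y: "1 \<le> y"
    and xy: "x * y < int q ^ (2 * m) - 1 - int q ^ (m - 1)"
    by (simp_all add: mem_Zdesk_iff)
  have pP: "?p * ?P = int q ^ (2 * m)" using l by (simp flip: power_add)
  have "int q \<le> ?p" using q l by (intro self_le_power) auto
  then have p: "2 \<le> ?p" using q by linarith
  have P: "2 * (x + 1) \<le> ?P"
  proof -
    define L where "L = 2 * m - l - 1"
    have L: "2 * m - l = Suc L" "k + 1 \<le> L" unfolding L_def using True by auto
    have "x + 1 \<le> int q ^ (k + 1)" using x by simp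
    also have "\<dots> \<le> int q ^ L" using q L by (intro power_increasing) auto
    finally have "2 * (x + 1) \<le> 2 * int q ^ L" by simp
    also have "\<dots> \<le> int q * int q ^ L" using q by (intro mult_right_mono) auto
    finally show ?thesis using L by simp
  qed
  have "1 \<le> int q ^ (m - 1)" using q by simp
  then have "x * y < ?p * ?P - 2" using xy pP by linarith
  from rot_prod_ge_or_extremal[OF p x(1) P y this]
  have "int q ^ (2 * m) - 1 \<le> fval q m x y l \<or> x = 1 \<and> y = int q ^ (2 * m) - 1 - ?P"
    using pP fval_eq_rot[of l m q x y] l by simp
  moreover have "l \<le> m" if "x = 1" "y = int q ^ (2 * m) - 1 - ?P"
  proof -
    have "int q ^ (m - 1) < int q ^ (2 * m - l)" using xy that by simp
    then have "m - 1 < 2 * m - l" using q by (simp add: power_less_imp_less_exp)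
    then show ?thesis by simp
  qed
  ultimately show ?thesis by blast
next
  case False
  then have "1 \<le> k" "k < m" "m < l" using k l by auto
  then show ?thesis using fval_ge_of_wide_shift[OF q _ _ _ _ Z] l by fastforce
qed

lemma fval_extremal:
  assumes q: "2 \<le> q" and l: "1 \<le> l" "l < 2 * m"
  shows "fval q m 1 (int q ^ (2 * m) - 1 - int q ^ (2 * m - l)) l = int q ^ (2 * m) - 1 - int q ^ l"
proof -
  define r where "r = int q"
  define L where "L = 2 * m - l"
  have r: "2 \<le> r" using q r_def by simp
  have "r \<le> r ^ l" "r \<le> r ^ L" using r l by (intro self_le_power; simp add: L_def)+
  then have "rot (r ^ l) (r ^ L) 1 * rot (r ^ l) (r ^ L) (r ^ l * r ^ L - 1 - r ^ L)
      = r ^ l * r ^ L - 1 - r ^ l"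
    using r by (intro rot_extremal_prod) auto
  moreover have "r ^ l * r ^ L = r ^ (2 * m)" using l by (simp add: L_def flip: power_add)
  ultimately show ?thesis using fval_eq_rot[of l m q] l unfolding r_def L_def by simp
qed

lemma extremal_mem_Zdesk:
  assumes q: "2 \<le> q" and l: "1 \<le> l" "l \<le> m"
  shows "(1, int q ^ (2 * m) - 1 - int q ^ (2 * m - l)) \<in> Zdesk q m 0"
proof -
  define r where "r = int q"
  define L where "L = 2 * m - l"
  have r: "2 \<le> r" using q r_def by simp
  have "r ^ (m - 1) < r ^ L" using r l by (intro power_strict_increasing) (auto simp: L_def)
  moreover have "r ^ L + 2 \<le> r ^ (2 * m)"
  proof -
    have "r \<le> r ^ L" using r l by (intro self_le_power) (auto simp: L_def)
    moreover have "2 * r ^ L \<le> r * r ^ L" using r by (intro mult_right_mono) auto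
    moreover have "r * r ^ L \<le> r ^ (2 * m)"
      using r l by (simp add: L_def power_increasing flip: power_Suc)
    ultimately show ?thesis using r by linarith
  qed
  moreover have "0 < r ^ L" using r by simp
  ultimately show ?thesis using r unfolding mem_Zdesk_iff r_def[symmetric] L_def[symmetric]
    by (simp del: zero_less_power)
qed

lemma fval_ge_off_critical:
  fixes q m k l :: nat
  assumes q: "2 \<le> q" and k: "2 * k \<le> 2 * m - 1" and Z: "(x, y) \<in> Zdesk q m k"
    and l: "odd l" "1 \<le> l" "l \<le> 2 * m - 1" "l \<noteq> 2 * m - k - 1"
  shows "even m \<Longrightarrow> int q ^ (2 * m) - 1 - int q ^ (m - 1) \<le> fval q m x y l"
    and "odd m \<Longrightarrow> int q ^ (2 * m) - 1 - int q ^ m \<le> fval q m x y l"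
proof -
  have "l < 2 * m" using l by simp
  then have cases: "int q ^ (2 * m) - 1 \<le> fval q m x y l \<or>
      l \<le> m \<and> fval q m x y l = int q ^ (2 * m) - 1 - int q ^ l"
    using fval_ge_or_extremal[OF q k Z l(2-4)] fval_extremal[OF q l(2)] by auto
  show "int q ^ (2 * m) - 1 - int q ^ (m - 1) \<le> fval q m x y l" if "even m"
  proof -
    have "int q ^ l \<le> int q ^ (m - 1)" if "l \<le> m"
    proof -
      have "l \<noteq> m" using \<open>even m\<close> l(1) by auto
      then show ?thesis using q that by (intro power_increasing) auto
    qed
    moreover have "0 \<le> int q ^ (m - 1)" by simp
    ultimately show ?thesis using cases by (elim disjE) linarith+
  qed
  have "int q ^ l \<le> int q ^ m" if "l \<le> m" using q that by (intro power_increasing) auto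
  moreover have "0 \<le> int q ^ m" by simp
  ultimately show "int q ^ (2 * m) - 1 - int q ^ m \<le> fval q m x y l"
    using cases by (elim disjE) linarith+
qed

lemma fval_ge_critical:
  fixes q m k :: nat
  assumes q: "2 \<le> q" and m: "3 < m" and k: "2 * k \<le> 2 * m - 1" and Z: "(x, y) \<in> Zdesk q m k"
  shows "m < 2 * m - k - 1 \<Longrightarrow> int q ^ (2 * m) - 1 \<le> fval q m x y (2 * m - k - 1)"
    and "(int q ^ m - 1)^2 \<le> fval q m x y (2 * m - k - 1)"
proof -
  define l where "l = 2 * m - k - 1"
  from Z have x: "int q ^ k \<le> x" "x < int q ^ (k + 1)" and y: "1 \<le> y"
    and xy: "x * y < int q ^ (2 * m) - 1 - int q ^ (m - 1)"
    by (simp_all add: mem_Zdesk_iff)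
  have "1 \<le> int q ^ k" using q by simp
  with x have "1 \<le> x" by linarith
  have kl: "k < m" "m \<le> l" "l < 2 * m" using k m unfolding l_def by auto
  have wide: "int q ^ (2 * m) - 1 \<le> fval q m x y l" if "m < l"
  proof (cases "k = 0")
    case True
    then have "l = 2 * m - 1" "2 * m - l = 1" using m unfolding l_def by auto
    then show ?thesis
      using rot_pow_prod_ge_max_shift[of "int q" m x y] fval_eq_rot[of l m q x y]
        q m \<open>1 \<le> x\<close> x y xy True kl
      by simp
  next
    case False
    then show ?thesis
      using fval_ge_of_wide_shift[OF q _ kl(1) that _ Z] kl by simp
  qed
  then show "m < 2 * m - k - 1 \<Longrightarrow> int q ^ (2 * m) - 1 \<le> fval q m x y (2 * m - k - 1)"
    unfolding l_def .
  define Q where "Q = int q ^ m"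
  have QQ: "Q * Q = int q ^ (2 * m)" unfolding Q_def by (simp flip: power_add mult_2)
  show "(int q ^ m - 1)^2 \<le> fval q m x y (2 * m - k - 1)"
  proof (cases "m < l")
    case True
    have "1 \<le> Q" using q unfolding Q_def by simp
    then have "(Q - 1)^2 \<le> Q * Q - 1" by (simp add: power2_eq_square algebra_simps)
    then show ?thesis using wide[OF True] QQ unfolding Q_def l_def by simp
  next
    case False
    then have "l = m" "k + 1 = m" using kl unfolding l_def by auto
    have "int q \<le> int q ^ k" using q m \<open>k + 1 = m\<close> by (intro self_le_power) auto
    moreover have "2 \<le> int q" using q by simp
    ultimately have "2 \<le> x" using x by linarith
    moreover have "x < Q" using x(2) unfolding Q_def \<open>k + 1 = m\<close>[symmetric] .
    moreover have "x * y < Q * Q" using xy QQ zero_le_power[of "int q" "m - 1"] by linarith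
    ultimately have "(Q - 1)^2 \<le> rot Q Q x * rot Q Q y" using y by (intro rot_square_prod_ge)
    then show ?thesis using fval_eq_rot[of m m q x y] \<open>l = m\<close> unfolding Q_def l_def by simp
  qed
qed

lemma critical_extremal:
  fixes q m :: nat
  assumes q: "2 \<le> q" and m: "1 \<le> m"
  shows "(int q ^ m - 1, int q ^ m - 1) \<in> Zdesk q m (m - 1)"
    and "fval q m (int q ^ m - 1) (int q ^ m - 1) m = (int q ^ m - 1)^2"
proof -
  define r where "r = int q"
  define Q where "Q = r ^ m"
  have r: "2 \<le> r" using q r_def by simp
  have QQ: "r ^ (2 * m) = Q * Q" unfolding Q_def by (simp flip: power_add mult_2)
  have Qr: "Q = r * r ^ (m - 1)" "r ^ (m - 1 + 1) = Q"
    unfolding Q_def using m by (simp_all flip: power_Suc)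
  have "1 \<le> r ^ (m - 1)" using r by simp
  moreover have "2 * r ^ (m - 1) \<le> r * r ^ (m - 1)" using r by (intro mult_right_mono) auto
  ultimately have Q: "2 * r ^ (m - 1) \<le> Q" "1 \<le> r ^ (m - 1)" using Qr by simp_all
  have "2 \<le> Q" using Q by simp
  then have "1 * Q \<le> Q * Q" by (intro mult_right_mono) auto
  moreover have "(Q - 1) * (Q - 1) < Q * Q - 1 - r ^ (m - 1)" using Q by (simp add: algebra_simps)
  ultimately show "(int q ^ m - 1, int q ^ m - 1) \<in> Zdesk q m (m - 1)"
    using Q \<open>2 \<le> Q\<close> unfolding mem_Zdesk_iff r_def[symmetric] Q_def[symmetric] QQ Qr(2)
    by (intro conjI) linarith+
  have "rot Q Q (Q - 1) = Q - 1"
    using rot_below_base[of Q "Q - 1" Q] Q by (simp add: algebra_simps)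
  then show "fval q m (int q ^ m - 1) (int q ^ m - 1) m = (int q ^ m - 1)^2"
    using fval_eq_rot[of m m q] unfolding r_def[symmetric] by (simp add: power2_eq_square flip: Q_def)
qed

theorem lemma9:
  fixes q m :: nat
  assumes "primepow q" and "m > 3"
  shows
   "(\<forall>k x y l. 2*k \<le> 2*m - 1 \<longrightarrow> (x, y) \<in> Zdesk q m k \<longrightarrow>
        odd l \<longrightarrow> 1 \<le> l \<longrightarrow> l \<le> 2*m - 1 \<longrightarrow> l \<noteq> 2*m - k - 1 \<longrightarrow>
        (even m \<longrightarrow> fval q m x y l \<ge> int q ^ (2*m) - 1 - int q ^ (m - 1)) \<and>
        (odd m \<longrightarrow> fval q m x y l \<ge> int q ^ (2*m) - 1 - int q ^ m))
  \<and> (even m \<longrightarrow>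
        (1, int q ^ (2*m) - 1 - int q ^ (2*m - (m - 1))) \<in> Zdesk q m 0 \<and>
        fval q m 1 (int q ^ (2*m) - 1 - int q ^ (2*m - (m - 1))) (m - 1)
          = int q ^ (2*m) - 1 - int q ^ (m - 1))
  \<and> (odd m \<longrightarrow>
        (1, int q ^ (2*m) - 1 - int q ^ (2*m - m)) \<in> Zdesk q m 0 \<and>
        fval q m 1 (int q ^ (2*m) - 1 - int q ^ (2*m - m)) m
          = int q ^ (2*m) - 1 - int q ^ m)
  \<and> (\<forall>k x y. 2*k \<le> 2*m - 1 \<longrightarrow> (x, y) \<in> Zdesk q m k \<longrightarrow> odd (2*m - k - 1) \<longrightarrow>
        (odd m \<longrightarrow> fval q m x y (2*m - k - 1) \<ge> (int q ^ m - 1)^2) \<and>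
        (even m \<longrightarrow> fval q m x y (2*m - k - 1) \<ge> int q ^ (2*m) - 1))
  \<and> (odd m \<longrightarrow>
        (int q ^ m - 1, int q ^ m - 1) \<in> Zdesk q m (m - 1) \<and>
        2*m - (m - 1) - 1 = m \<and>
        fval q m (int q ^ m - 1) (int q ^ m - 1) m = (int q ^ m - 1)^2)"
proof -
  have q: "2 \<le> q" using primepow_gt_Suc_0[OF assms(1)] by simp
  have m: "1 \<le> m - 1" "m - 1 \<le> m" "m - 1 < 2 * m" "m < 2 * m"
    using assms(2) by auto
  show ?thesis
    apply (intro conjI)
    subgoal using fval_ge_off_critical[OF q] by blast
    subgoal using extremal_mem_Zdesk[OF q m(1,2)] fval_extremal[OF q m(1,3)] by blast
    subgoal using extremal_mem_Zdesk[OF q _ order.refl] fval_extremal[OF q _ m(4)] assms(2) by simp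
    subgoal
    proof (intro allI impI conjI)
      fix k x y
      assume k: "2 * k \<le> 2 * m - 1" and Z: "(x, y) \<in> Zdesk q m k" and l: "odd (2 * m - k - 1)"
      show "(int q ^ m - 1)^2 \<le> fval q m x y (2 * m - k - 1)"
        using fval_ge_critical(2)[OF q assms(2) k Z] .
      assume "even m"
      with k l have "m < 2 * m - k - 1" by presburger
      then show "int q ^ (2 * m) - 1 \<le> fval q m x y (2 * m - k - 1)"
        using fval_ge_critical(1)[OF q assms(2) k Z] by simp
    qed
    subgoal using critical_extremal[OF q] m by simp
    done
qed

end
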